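(* Let $g>0$, let $F:\mathbb{R}\to\mathbb{R}$ be continuously differentiable with $F(0)=F(a)=F(1)=0$ for some $a\in\,]0,1[$, $F>0$ on $(-\infty,0[\,\cup\,]a,1[$ and $F<0$ on $]0,a[\,\cup\,]1,+\infty)$. Let $\beta>0$, let $n:\mathbb{R}\to\mathbb{R}^+$ be $\beta$-periodic and locally integrable, and let $F_0$ be the modification of $F$ described in the context. Consider the planar system \[\dot x=y,\qquad \dot y=-h(t,x),\qquad h(t,s)=-g s+n(t)F_0(s),\] and let $m\ge1$ be an integer. Then there is $R_0=R_0(m,|n|_1)>0$ such that for each initial point $z_2\in\mathbb{R}^2$ with $\|z_2\|\ge R_0$ and each $q_0\in\mathbb{R}^2$ with $\|q_0\|\le1$, the rotation number $\mathrm{rot}_m(z_2,q_0)$ is defined and \[\mathrm{rot}_m(z_2,q_0)<1.\]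
   Context: Let $\delta(s)=\max\{0,\min\{s,1\}\}$, $\ell(s)=\exp(1/s)$ for $s<0$, $\ell(s)=0$ for $0\le s\le1$, $\ell(s)=-\exp(1/(1-s))$ for $s>1$, $c_0=\max_{s\in[0,1]}|F(s)|$, and fix $0<k_0\le c_0$. Set $F_0(s)=F(\delta(s))+k_0\ell(s)$; this is a bounded, globally Lipschitz function equal to $F$ on $[0,1]$. Then every solution of the system is defined on all of $\mathbb{R}$ and unique given initial data; write $\zeta(t,0,z_0)=(x(t),y(t))$ for the solution with $\zeta(0)=z_0$. $|n|_1=\int_0^\beta n(t)\,dt$; the constant $R_0$ depends on $m$ and $|n|_1$ (given the fixed data $g,F,k_0,\beta$). For $q_0\in\mathbb{R}^2$ and $z_0$ with $\zeta(t,0,z_0)\ne q_0$ for all $t\in[0,m\beta]$, write $\zeta(t,0,z_0)-q_0=\rho(t)(\cos\theta(t),\sin\theta(t))$ with $\rho>0$ and $\theta$ continuous; the rotation number is $\mathrm{rot}_m(z_0,q_0)=\frac{\theta(0)-\theta(m\beta)}{2\pi}$, i.e. the normalized clockwise angular displacement of the solution around $q_0$ over $[0,m\beta]$. *)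

theory Defs
  imports "HOL-Analysis.Analysis"
begin

definition delta_cut :: "real \<Rightarrow> real" where
  "delta_cut s = max 0 (min s 1)"

definition ell :: "real \<Rightarrow> real" where
  "ell s = (if s < 0 then exp (1 / s) else if s \<le> 1 then 0 else - exp (1 / (1 - s)))"

definition c0_of :: "(real \<Rightarrow> real) \<Rightarrow> real" where
  "c0_of F = Sup ((\<lambda>s. \<bar>F s\<bar>) ` {0..1})"

definition F0_of :: "(real \<Rightarrow> real) \<Rightarrow> real \<Rightarrow> real \<Rightarrow> real" where
  "F0_of F k0 s = F (delta_cut s) + k0 * ell s"

definition h_of :: "real \<Rightarrow> (real \<Rightarrow> real) \<Rightarrow> real \<Rightarrow> (real \<Rightarrow> real) \<Rightarrow> real \<Rightarrow> real \<Rightarrow> real" where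
  "h_of g F k0 n t s = - g * s + n t * F0_of F k0 s"

definition vfield :: "real \<Rightarrow> (real \<Rightarrow> real) \<Rightarrow> real \<Rightarrow> (real \<Rightarrow> real) \<Rightarrow> real \<Rightarrow> real \<times> real \<Rightarrow> real \<times> real" where
  "vfield g F k0 n t z = (snd z, - h_of g F k0 n t (fst z))"

text \<open>Solution in the Caratheodory (integral) sense, defined on all of R, with zeta(0) = z0.\<close>
definition is_solution ::
  "real \<Rightarrow> (real \<Rightarrow> real) \<Rightarrow> real \<Rightarrow> (real \<Rightarrow> real) \<Rightarrow> (real \<Rightarrow> real \<times> real) \<Rightarrow> real \<times> real \<Rightarrow> bool" where
  "is_solution g F k0 n \<zeta> z0 \<longleftrightarrow>
     \<zeta> 0 = z0 \<and> continuous_on UNIV \<zeta> \<and>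
     (\<forall>a b. a \<le> b \<longrightarrow> ((\<lambda>t. vfield g F k0 n t (\<zeta> t)) has_integral (\<zeta> b - \<zeta> a)) {a..b})"

definition rot_defined :: "nat \<Rightarrow> real \<Rightarrow> (real \<Rightarrow> real \<times> real) \<Rightarrow> real \<times> real \<Rightarrow> bool" where
  "rot_defined m \<beta> \<zeta> q0 \<longleftrightarrow> (\<forall>t\<in>{0..real m * \<beta>}. \<zeta> t \<noteq> q0)"

definition is_angle :: "nat \<Rightarrow> real \<Rightarrow> (real \<Rightarrow> real \<times> real) \<Rightarrow> real \<times> real \<Rightarrow> (real \<Rightarrow> real) \<Rightarrow> bool" where
  "is_angle m \<beta> \<zeta> q0 \<theta> \<longleftrightarrow> continuous_on {0..real m * \<beta>} \<theta> \<and>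
     (\<exists>\<rho>. \<forall>t\<in>{0..real m * \<beta>}. \<rho> t > 0 \<and> \<zeta> t - q0 = \<rho> t *\<^sub>R (cos (\<theta> t), sin (\<theta> t)))"

definition rot :: "nat \<Rightarrow> real \<Rightarrow> (real \<Rightarrow> real \<times> real) \<Rightarrow> real \<times> real \<Rightarrow> real" where
  "rot m \<beta> \<zeta> q0 = (let \<theta> = (SOME \<theta>. is_angle m \<beta> \<zeta> q0 \<theta>) in (\<theta> 0 - \<theta> (real m * \<beta>)) / (2 * pi))"

end

(*
  With k = sqrt g, the saddle coordinates y + k x and y - k x of the unforced equation
  x'' = g x evolve like e^(kt) and e^(-kt). The forcing n(t) F0(x) has L^1 norm at most
  (c0 + k0) m |n|_1 on [0, m beta], so it moves e^(-kt) (y + k x) and e^(kt) (y - k x) only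
  by a bounded amount. A starting point far from the origin makes one of the two coordinates
  large at t = 0; it then keeps its sign and stays large on the whole interval, so
  zeta(t) - q0 lies in a fixed open half-plane. A continuous angle of a curve in an open
  half-plane varies by less than 2 pi, so the rotation number is below 1.
*)
theory Submission
  imports Defs
begin

lemma angle_variation_lt_2pi_in_halfplane:
  fixes \<theta> :: "real \<Rightarrow> real"
  assumes "0 \<le> T" and cont: "continuous_on {0..T} \<theta>"
    and pos: "\<And>t. t \<in> {0..T} \<Longrightarrow> a * cos (\<theta> t) + b * sin (\<theta> t) > 0"
  shows "\<theta> 0 - \<theta> T < 2 * pi"
proof (rule ccontr)
  \<comment> \<open>Otherwise \<theta> passes a value where a cos \<theta> + b sin \<theta> = -sqrt (a^2 + b^2).\<close>
  assume wind: "\<not> \<theta> 0 - \<theta> T < 2 * pi"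
  define r where "r = sqrt (a\<^sup>2 + b\<^sup>2)"
  have "a \<noteq> 0 \<or> b \<noteq> 0"
    using pos[of 0] \<open>0 \<le> T\<close> by auto
  then have r_pos: "r > 0"
    by (simp add: r_def sum_power2_gt_zero_iff)
  have "(a / r)\<^sup>2 + (b / r)\<^sup>2 = 1"
    using r_pos by (auto simp: r_def power_divide simp flip: add_divide_distrib)
  then obtain \<alpha> where "a / r = cos \<alpha>" "b / r = sin \<alpha>"
    by (metis sincos_total_2pi)
  then have phase: "a * cos (\<theta> t) + b * sin (\<theta> t) = r * cos (\<theta> t - \<alpha>)" for t
    using r_pos by (simp add: cos_diff field_simps)
  define j where "j = \<lceil>(\<theta> T - \<alpha> - pi) / (2 * pi)\<rceil>"
  define s where "s = \<alpha> + pi + 2 * pi * of_int j"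
  have "(\<theta> T - \<alpha> - pi) / (2 * pi) \<le> of_int j" "of_int j < (\<theta> T - \<alpha> - pi) / (2 * pi) + 1"
    unfolding j_def by linarith+
  then have "\<theta> T \<le> s" "s \<le> \<theta> 0"
    using wind unfolding s_def by (simp_all add: field_simps)
  then obtain t where t: "t \<in> {0..T}" "\<theta> t = s"
    using IVT2'[of \<theta> T s 0] \<open>0 \<le> T\<close> cont by auto
  have "cos (\<theta> t - \<alpha>) = -1"
    unfolding t(2) s_def by (simp add: cos_add)
  then show False
    using pos[OF t(1)] phase[of t] r_pos by simp
qed

lemma continuous_polar_angle_in_halfplane:
  fixes \<zeta> :: "real \<Rightarrow> real \<times> real"
  assumes cont: "continuous_on S \<zeta>"
    and halfplane: "\<And>t. t \<in> S \<Longrightarrow> a * fst (\<zeta> t - q) + b * snd (\<zeta> t - q) > 0"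
  obtains \<theta> \<rho> where "continuous_on S \<theta>"
    "\<And>t. t \<in> S \<Longrightarrow> \<rho> t > 0 \<and> \<zeta> t - q = \<rho> t *\<^sub>R (cos (\<theta> t), sin (\<theta> t))"
proof -
  \<comment> \<open>Rotating by e = a - ib moves the curve into the right half-plane, where Ln is continuous.\<close>
  define c where "c t = Complex (fst (\<zeta> t - q)) (snd (\<zeta> t - q))" for t
  define e where "e = Complex a (- b)"
  define G where "G t = Ln (e * c t) - Ln e" for t
  have Re_pos: "Re (e * c t) > 0" if "t \<in> S" for t
    using halfplane[OF that] by (simp add: e_def c_def)
  have "continuous_on S c"
    unfolding c_def Complex_eq by (intro continuous_intros cont)
  moreover have "e * c t \<notin> \<real>\<^sub>\<le>\<^sub>0" if "t \<in> S" for t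
    using Re_pos[OF that] by (auto simp: complex_nonpos_Reals_iff)
  ultimately have "continuous_on S (\<lambda>t. Im (G t))"
    unfolding G_def by (intro continuous_intros) auto
  moreover have "exp (Re (G t)) > 0 \<and> \<zeta> t - q = exp (Re (G t)) *\<^sub>R (cos (Im (G t)), sin (Im (G t)))"
    if "t \<in> S" for t
  proof -
    have "e * c t \<noteq> 0"
      using Re_pos[OF that] by (metis less_irrefl zero_complex.sel(1))
    then have "e \<noteq> 0" "c t \<noteq> 0"
      by simp_all
    then have "exp (G t) = c t"
      by (simp add: G_def exp_diff)
    then have "Re (exp (G t)) = fst (\<zeta> t - q)" "Im (exp (G t)) = snd (\<zeta> t - q)"
      by (simp_all add: c_def)
    then show ?thesis
      by (simp add: Re_exp Im_exp prod_eq_iff)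
  qed
  ultimately show ?thesis
    by (rule that)
qed

lemma rot_lt_1_if_halfplane:
  fixes \<zeta> :: "real \<Rightarrow> real \<times> real"
  assumes cont: "continuous_on {0..real m * \<beta>} \<zeta>" and "0 \<le> real m * \<beta>"
    and halfplane: "\<And>t. t \<in> {0..real m * \<beta>} \<Longrightarrow> a * fst (\<zeta> t - q) + b * snd (\<zeta> t - q) > 0"
  shows "rot_defined m \<beta> \<zeta> q" and "rot m \<beta> \<zeta> q < 1"
proof -
  show "rot_defined m \<beta> \<zeta> q"
    unfolding rot_defined_def using halfplane by fastforce
  obtain \<theta>\<^sub>0 where "is_angle m \<beta> \<zeta> q \<theta>\<^sub>0"
    using continuous_polar_angle_in_halfplane[OF cont halfplane] unfolding is_angle_def by metis
  then have "is_angle m \<beta> \<zeta> q (SOME \<theta>. is_angle m \<beta> \<zeta> q \<theta>)"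
    by (rule someI[where P = "is_angle m \<beta> \<zeta> q"])
  then obtain \<theta> \<rho> where \<theta>: "\<theta> = (SOME \<theta>. is_angle m \<beta> \<zeta> q \<theta>)"
    and cont_\<theta>: "continuous_on {0..real m * \<beta>} \<theta>"
    and polar: "\<And>t. t \<in> {0..real m * \<beta>} \<Longrightarrow> \<rho> t > 0 \<and> \<zeta> t - q = \<rho> t *\<^sub>R (cos (\<theta> t), sin (\<theta> t))"
    unfolding is_angle_def by blast
  have "a * cos (\<theta> t) + b * sin (\<theta> t) > 0" if "t \<in> {0..real m * \<beta>}" for t
  proof -
    have "\<rho> t * (a * cos (\<theta> t) + b * sin (\<theta> t)) > 0"
      using halfplane[OF that] polar[OF that] by (simp add: algebra_simps)
    then show ?thesis
      using polar[OF that] by (simp add: zero_less_mult_iff)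
  qed
  then have "\<theta> 0 - \<theta> (real m * \<beta>) < 2 * pi"
    by (rule angle_variation_lt_2pi_in_halfplane[OF \<open>0 \<le> real m * \<beta>\<close> cont_\<theta>])
  then show "rot m \<beta> \<zeta> q < 1"
    by (simp add: rot_def \<theta>[symmetric])
qed

lemma saddle_coordinate_drift:
  fixes x y \<phi> :: "real \<Rightarrow> real"
  assumes "k > 0" and \<sigma>: "\<sigma> \<in> {-1, 1}" and cont_x: "continuous_on {0..T} x"
    and cont_y: "continuous_on {0..T} y"
    and eq_x: "\<And>t. t \<in> {0..T} \<Longrightarrow> x t = x 0 + integral {0..t} y"
    and eq_y: "\<And>t. t \<in> {0..T} \<Longrightarrow> y t + \<phi> t = y 0 + k\<^sup>2 * integral {0..t} x"
    and bound_\<phi>: "\<And>t. t \<in> {0..T} \<Longrightarrow> \<bar>\<phi> t\<bar> \<le> P"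
    and t: "t \<in> {0..T}"
  shows "\<bar>exp (- \<sigma> * k * t) * (y t + \<phi> t + \<sigma> * k * x t) - (y 0 + \<sigma> * k * x 0)\<bar>
           \<le> k * exp (k * T) * P * T"
proof -
  \<comment> \<open>y need not be differentiable, but by eq_y the sum y + \<phi> = Y is.\<close>
  define X where "X s = x 0 + integral {0..s} y" for s
  define Y where "Y s = y 0 + k\<^sup>2 * integral {0..s} x" for s
  define f where "f s = exp (- \<sigma> * k * s) * (Y s + \<sigma> * k * X s)" for s
  have f_eq: "f s = exp (- \<sigma> * k * s) * (y s + \<phi> s + \<sigma> * k * x s)" if "s \<in> {0..T}" for s
    using eq_x[OF that] eq_y[OF that] by (simp add: f_def X_def Y_def)
  have "(f has_real_derivative - \<sigma> * k * exp (- \<sigma> * k * s) * \<phi> s) (at s within {0..T})"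
    if s: "s \<in> {0..T}" for s
  proof -
    have "(f has_real_derivative
            exp (- \<sigma> * k * s) * (k\<^sup>2 * x s + \<sigma> * k * y s - \<sigma> * k * (Y s + \<sigma> * k * X s)))
          (at s within {0..T})"
      unfolding f_def X_def Y_def
      by (rule derivative_eq_intros integral_has_real_derivative[OF cont_x s]
          integral_has_real_derivative[OF cont_y s] refl | simp add: algebra_simps)+
    moreover have "X s = x s" "Y s = y s + \<phi> s"
      using eq_x[OF s] eq_y[OF s] by (simp_all add: X_def Y_def)
    ultimately show ?thesis
      using \<sigma> by (auto simp: algebra_simps power2_eq_square)
  qed
  moreover have "norm (- \<sigma> * k * exp (- \<sigma> * k * s) * \<phi> s) \<le> k * exp (k * T) * P"
    if s: "s \<in> {0..T}" for s
  proof -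
    have "0 \<le> k * s" "k * s \<le> k * T"
      using s \<open>k > 0\<close> by (auto intro: mult_left_mono)
    then have "exp (- \<sigma> * k * s) \<le> exp (k * T)"
      using \<sigma> by auto
    then have "exp (- \<sigma> * k * s) * \<bar>\<phi> s\<bar> \<le> exp (k * T) * P"
      using bound_\<phi>[OF s] by (intro mult_mono) auto
    then show ?thesis
      using \<sigma> \<open>k > 0\<close> by (auto simp: abs_mult mult.assoc)
  qed
  ultimately have "norm (f t - f 0) \<le> k * exp (k * T) * P * norm (t - 0)"
    using t by (intro field_differentiable_bound[of "{0..T}"]) auto
  also have "\<dots> \<le> k * exp (k * T) * P * T"
    using t bound_\<phi>[OF t] \<open>k > 0\<close> by (intro mult_left_mono) auto
  finally show ?thesis
    using f_eq[OF t] by (simp add: f_def X_def Y_def)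
qed

text \<open>k e^(kT) P T is the drift bound of saddle_coordinate_drift; the margin (P + k + 2) e^(kT)
  survives the factor e^(-kT) and then absorbs the forcing and the offset q.\<close>
definition saddle_threshold :: "real \<Rightarrow> real \<Rightarrow> real \<Rightarrow> real" where
  "saddle_threshold k T P = (k * P * T + P + k + 2) * exp (k * T)"

lemma saddle_threshold_pos:
  assumes "0 < k" "0 \<le> P" "0 \<le> T"
  shows "0 < saddle_threshold k T P"
proof -
  have "0 \<le> k * P * T"
    using assms by simp
  then have "0 < k * P * T + P + k + 2"
    using assms by linarith
  then show ?thesis
    by (simp add: saddle_threshold_def)
qed

lemma saddle_stays_in_halfplane:
  fixes x y \<phi> :: "real \<Rightarrow> real"
  assumes "k > 0" and \<sigma>: "\<sigma> \<in> {-1, 1}" and "continuous_on {0..T} x" "continuous_on {0..T} y"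
    and "\<And>t. t \<in> {0..T} \<Longrightarrow> x t = x 0 + integral {0..t} y"
    and "\<And>t. t \<in> {0..T} \<Longrightarrow> y t + \<phi> t = y 0 + k\<^sup>2 * integral {0..t} x"
    and bound_\<phi>: "\<And>t. t \<in> {0..T} \<Longrightarrow> \<bar>\<phi> t\<bar> \<le> P"
    and large: "saddle_threshold k T P < \<bar>y 0 + \<sigma> * k * x 0\<bar>"
    and "\<bar>u\<bar> \<le> 1" "\<bar>v\<bar> \<le> 1"
  obtains a b where "\<And>t. t \<in> {0..T} \<Longrightarrow> a * (x t - u) + b * (y t - v) > 0"
proof -
  define p where "p = y 0 + \<sigma> * k * x 0"
  define \<epsilon> where "\<epsilon> = sgn p"
  have "\<epsilon> * \<sigma> * k * (x t - u) + \<epsilon> * (y t - v) > 0" if t: "t \<in> {0..T}" for t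
  proof -
    define Z where "Z = y t + \<phi> t + \<sigma> * k * x t"
    have "0 \<le> P" "0 \<le> T"
      using bound_\<phi>[OF t] t by auto
    have drift: "\<bar>exp (- \<sigma> * k * t) * Z - p\<bar> \<le> k * exp (k * T) * P * T"
      unfolding Z_def p_def using saddle_coordinate_drift[OF assms(1-7) t] .
    have sign: "\<epsilon> * p = \<bar>p\<bar>" "\<bar>\<epsilon>\<bar> = 1"
      using large saddle_threshold_pos[OF \<open>k > 0\<close> \<open>0 \<le> P\<close> \<open>0 \<le> T\<close>]
      by (auto simp: \<epsilon>_def p_def sgn_mult_abs abs_sgn)
    have far: "\<epsilon> * (exp (- \<sigma> * k * t) * Z) > (P + k + 2) * exp (k * T)"
      using drift sign large abs_mult[of \<epsilon> "exp (- \<sigma> * k * t) * Z - p"]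
      by (simp add: saddle_threshold_def p_def algebra_simps)
    have "0 \<le> k * t" "k * t \<le> k * T"
      using t \<open>k > 0\<close> by (auto intro: mult_left_mono)
    then have "0 \<le> \<sigma> * k * t + k * T"
      using \<sigma> by auto
    then have growth: "1 \<le> exp (\<sigma> * k * t) * exp (k * T)"
      by (simp flip: exp_add)
    have "P + k + 2 \<le> exp (\<sigma> * k * t) * ((P + k + 2) * exp (k * T))"
      using mult_right_mono[OF growth, of "P + k + 2"] \<open>0 \<le> P\<close> \<open>k > 0\<close> by (simp add: algebra_simps)
    also have "\<dots> < exp (\<sigma> * k * t) * (\<epsilon> * (exp (- \<sigma> * k * t) * Z))"
      using far by simp
    also have "\<dots> = \<epsilon> * Z"
      by (simp add: exp_minus field_simps)
    finally have "P + k + 2 < \<epsilon> * Z" .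
    moreover have "\<bar>\<epsilon> * \<phi> t\<bar> \<le> P" "\<bar>\<epsilon> * \<sigma> * k * u\<bar> \<le> k" "\<bar>\<epsilon> * v\<bar> \<le> 1"
      using sign \<sigma> bound_\<phi>[OF t] \<open>\<bar>u\<bar> \<le> 1\<close> \<open>\<bar>v\<bar> \<le> 1\<close> \<open>k > 0\<close>
      by (auto simp: abs_mult mult_left_le)
    ultimately show ?thesis
      unfolding Z_def by (simp add: algebra_simps)
  qed
  then show ?thesis
    by (rule that)
qed

lemma exists_large_saddle_coordinate:
  fixes x y :: real
  assumes "0 < k" and "Q * (1 + 1 / k) < norm (x, y)"
  obtains \<sigma> where "\<sigma> \<in> {-1, 1}" and "Q < \<bar>y + \<sigma> * k * x\<bar>"
proof (rule ccontr)
  assume "\<not> thesis"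
  then have "\<bar>y + k * x\<bar> \<le> Q" "\<bar>y - k * x\<bar> \<le> Q"
    using that[of 1] that[of "-1"] by force+
  then have "\<bar>y\<bar> \<le> Q" "\<bar>x\<bar> \<le> Q / k"
    using \<open>0 < k\<close> by (auto simp: abs_mult abs_le_iff field_simps)
  then have "norm (x, y) \<le> Q * (1 + 1 / k)"
    using norm_Pair_le[of x y] by (simp add: algebra_simps)
  then show False
    using assms(2) by simp
qed

lemma periodic_shift_multiple:
  assumes "\<And>t. f (t + \<beta>) = f t"
  shows "f (real j * \<beta> + t) = f t"
proof (induction j)
  case (Suc j)
  have "f (real (Suc j) * \<beta> + t) = f ((real j * \<beta> + t) + \<beta>)"
    by (simp add: algebra_simps)
  then show ?case
    using assms Suc by simp
qed simp

lemma integral_periodic_multiple: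
  fixes f :: "real \<Rightarrow> real"
  assumes periodic: "\<And>t. f (t + \<beta>) = f t" and integrable: "\<And>u v. f integrable_on {u..v}"
    and "0 \<le> \<beta>"
  shows "integral {0..real j * \<beta>} f = real j * integral {0..\<beta>} f"
proof (induction j)
  case (Suc j)
  have "integral {real j * \<beta>..real j * \<beta> + \<beta>} f = integral {0..\<beta>} (f \<circ> (+) (real j * \<beta>))"
    using integral_shift_Icc_real[of 0 \<beta> f "real j * \<beta>"] by (simp add: add.commute)
  also have "\<dots> = integral {0..\<beta>} f"
    using periodic_shift_multiple[of f, OF periodic] by (simp add: o_def)
  finally have "integral {0..real (Suc j) * \<beta>} f = integral {0..real j * \<beta>} f + integral {0..\<beta>} f"
    using Henstock_Kurzweil_Integration.integral_combine[of 0 "real j * \<beta>" "real j * \<beta> + \<beta>" f]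
      integrable \<open>0 \<le> \<beta>\<close> by (simp add: algebra_simps)
  then show ?case
    using Suc by (simp add: algebra_simps)
qed simp

lemma abs_integral_le_weighted:
  fixes f w :: "real \<Rightarrow> real"
  assumes "f integrable_on {0..t}" and "\<And>s. \<bar>f s\<bar> \<le> C * w s" and "\<And>s. 0 \<le> w s"
    and "\<And>u v. w integrable_on {u..v}" and "t \<le> T" and "0 \<le> C"
  shows "\<bar>integral {0..t} f\<bar> \<le> C * integral {0..T} w"
proof -
  have "norm (integral {0..t} f) \<le> integral {0..t} (\<lambda>s. C * w s)"
    using assms(1,2,4) by (intro integral_norm_bound_integral integrable_on_mult_right) auto
  also have "\<dots> = C * integral {0..t} w"
    by simp
  also have "\<dots> \<le> C * integral {0..T} w"
    using assms(3-6) by (intro mult_left_mono integral_subset_le) auto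
  finally show ?thesis
    by simp
qed

lemma abs_ell_le_1: "\<bar>ell s\<bar> \<le> 1"
  by (simp add: ell_def divide_neg_pos)

lemma abs_F0_of_le:
  assumes "continuous_on {0..1} F" and "0 \<le> k0"
  shows "\<bar>F0_of F k0 s\<bar> \<le> c0_of F + k0"
proof -
  have "bounded ((\<lambda>s. \<bar>F s\<bar>) ` {0..1})"
    using assms(1) by (intro compact_imp_bounded compact_continuous_image continuous_intros) auto
  then have "\<bar>F (delta_cut s)\<bar> \<le> c0_of F"
    unfolding c0_of_def by (intro cSUP_upper bounded_imp_bdd_above) (auto simp: delta_cut_def)
  moreover have "\<bar>k0 * ell s\<bar> \<le> k0"
    using abs_ell_le_1[of s] \<open>0 \<le> k0\<close> by (simp add: abs_mult mult_left_le)
  ultimately show ?thesis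
    unfolding F0_of_def by linarith
qed

lemma is_solution_integral_equations:
  assumes sol: "is_solution g F k0 n \<zeta> z" and "0 \<le> t"
  defines "x \<equiv> \<lambda>s. fst (\<zeta> s)" and "y \<equiv> \<lambda>s. snd (\<zeta> s)"
    and "\<phi> \<equiv> \<lambda>s. n s * F0_of F k0 (fst (\<zeta> s))"
  shows "x t = x 0 + integral {0..t} y"
    and "y t + integral {0..t} \<phi> = y 0 + g * integral {0..t} x"
    and "\<phi> integrable_on {0..t}"
proof -
  have field: "((\<lambda>s. vfield g F k0 n s (\<zeta> s)) has_integral \<zeta> t - \<zeta> 0) {0..t}"
    using sol \<open>0 \<le> t\<close> unfolding is_solution_def by blast
  have "(y has_integral x t - x 0) {0..t}"
    using has_integral_linear[OF field bounded_linear_fst] by (simp add: x_def y_def vfield_def o_def)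
  then show "x t = x 0 + integral {0..t} y"
    by (simp add: integral_unique)
  have second: "((\<lambda>s. g * x s - \<phi> s) has_integral y t - y 0) {0..t}"
    using has_integral_linear[OF field bounded_linear_snd]
    by (simp add: x_def y_def \<phi>_def vfield_def h_of_def o_def)
  have linear: "((\<lambda>s. g * x s) has_integral g * integral {0..t} x) {0..t}"
  proof -
    have "continuous_on UNIV \<zeta>"
      using sol by (simp add: is_solution_def)
    then have "continuous_on {0..t} x"
      unfolding x_def by (intro continuous_intros) (auto intro: continuous_on_subset)
    then show ?thesis
      by (intro has_integral_mult_right integrable_integral integrable_continuous_real)
  qed
  have "(\<phi> has_integral g * integral {0..t} x - (y t - y 0)) {0..t}"
    using has_integral_diff[OF linear second] by simp
  then show "y t + integral {0..t} \<phi> = y 0 + g * integral {0..t} x" and "\<phi> integrable_on {0..t}"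
    by (auto simp: integral_unique)
qed

lemma solution_stays_in_halfplane:
  assumes "0 < g" and sol: "is_solution g F k0 n \<zeta> z"
    and F0_bound: "\<And>s. \<bar>F0_of F k0 s\<bar> \<le> C" and "0 \<le> C"
    and n_nonneg: "\<And>t. 0 \<le> n t" and n_integrable: "\<And>u v. n integrable_on {u..v}"
    and "C * integral {0..T} n \<le> P"
    and large: "saddle_threshold (sqrt g) T P * (1 + 1 / sqrt g) < norm z" and "norm q \<le> 1"
  obtains a b where "\<And>t. t \<in> {0..T} \<Longrightarrow> a * fst (\<zeta> t - q) + b * snd (\<zeta> t - q) > 0"
proof -
  define k where "k = sqrt g"
  define x where "x s = fst (\<zeta> s)" for s
  define y where "y s = snd (\<zeta> s)" for s
  define \<phi> where "\<phi> t = integral {0..t} (\<lambda>s. n s * F0_of F k0 (x s))" for t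
  have "0 < k" "k\<^sup>2 = g"
    using \<open>0 < g\<close> by (auto simp: k_def)
  have "continuous_on UNIV \<zeta>" "\<zeta> 0 = z"
    using sol by (auto simp: is_solution_def)
  then have cont: "continuous_on {0..T} x" "continuous_on {0..T} y"
    unfolding x_def y_def by (auto intro!: continuous_intros intro: continuous_on_subset)
  note equations = is_solution_integral_equations[OF sol, folded x_def y_def]
  have eq_x: "x t = x 0 + integral {0..t} y" and eq_y: "y t + \<phi> t = y 0 + k\<^sup>2 * integral {0..t} x"
    if "t \<in> {0..T}" for t
    using equations(1,2)[of t] that \<open>k\<^sup>2 = g\<close> by (auto simp: \<phi>_def)
  have "\<bar>\<phi> t\<bar> \<le> P" if "t \<in> {0..T}" for t
  proof -
    have "\<bar>n s * F0_of F k0 (x s)\<bar> \<le> C * n s" for s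
      using mult_left_mono[OF F0_bound n_nonneg, of s "x s"] n_nonneg[of s]
      by (simp add: abs_mult mult.commute)
    then have "\<bar>\<phi> t\<bar> \<le> C * integral {0..T} n"
      unfolding \<phi>_def using equations(3)[of t] that n_nonneg n_integrable \<open>0 \<le> C\<close>
      by (intro abs_integral_le_weighted) auto
    then show ?thesis
      using \<open>C * integral {0..T} n \<le> P\<close> by linarith
  qed
  moreover obtain \<sigma> where "\<sigma> \<in> {-1, 1}" "saddle_threshold k T P < \<bar>y 0 + \<sigma> * k * x 0\<bar>"
    using exists_large_saddle_coordinate[OF \<open>0 < k\<close>] large \<open>\<zeta> 0 = z\<close>
    unfolding k_def x_def y_def by (metis prod.collapse)
  moreover have "\<bar>fst q\<bar> \<le> 1" "\<bar>snd q\<bar> \<le> 1"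
    using \<open>norm q \<le> 1\<close> norm_fst_le[of "fst q" "snd q"] norm_snd_le[of "snd q" "fst q"] by auto
  ultimately obtain a b where "\<And>t. t \<in> {0..T} \<Longrightarrow> a * (x t - fst q) + b * (y t - snd q) > 0"
    using saddle_stays_in_halfplane[OF \<open>0 < k\<close> _ cont eq_x eq_y] by metis
  then show ?thesis
    using that[of a b] by (simp add: x_def y_def)
qed

definition rotation_radius :: "real \<Rightarrow> (real \<Rightarrow> real) \<Rightarrow> real \<Rightarrow> nat \<Rightarrow> real \<Rightarrow> real \<Rightarrow> real" where
  "rotation_radius g F k0 m \<beta> L =
     (saddle_threshold (sqrt g) (real m * \<beta>) ((c0_of F + k0) * (real m * \<bar>L\<bar>)) + 1) * (1 + 1 / sqrt g)"

lemma rotation_radius_pos: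
  assumes "0 < g" and "0 \<le> c0_of F + k0" and "0 \<le> \<beta>"
  shows "0 < rotation_radius g F k0 m \<beta> L"
  unfolding rotation_radius_def using assms saddle_threshold_pos[of "sqrt g"]
  by (intro mult_pos_pos add_pos_pos) simp_all

lemma rot_lt_1_beyond_rotation_radius:
  assumes "0 < g" and "continuous_on {0..1} F" and "0 \<le> k0" and "0 \<le> \<beta>"
    and n_nonneg: "\<And>t. 0 \<le> n t" and n_periodic: "\<And>t. n (t + \<beta>) = n t"
    and n_integrable: "\<And>u v. n integrable_on {u..v}"
    and sol: "is_solution g F k0 n \<zeta> z" and "norm q \<le> 1"
    and far: "rotation_radius g F k0 m \<beta> (integral {0..\<beta>} n) \<le> norm z"
  shows "rot_defined m \<beta> \<zeta> q" and "rot m \<beta> \<zeta> q < 1"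
proof -
  define k where "k = sqrt g"
  define T where "T = real m * \<beta>"
  define C where "C = c0_of F + k0"
  define P where "P = C * (real m * \<bar>integral {0..\<beta>} n\<bar>)"
  have F0_bound: "\<bar>F0_of F k0 s\<bar> \<le> C" for s
    unfolding C_def using abs_F0_of_le assms(2,3) by simp
  then have "0 \<le> C"
    using order_trans[OF abs_ge_zero] by blast
  have "0 < k" "0 \<le> T"
    using \<open>0 < g\<close> \<open>0 \<le> \<beta>\<close> by (simp_all add: k_def T_def)
  have forcing_bound: "C * integral {0..T} n \<le> P"
    using integral_periodic_multiple[OF n_periodic n_integrable \<open>0 \<le> \<beta>\<close>, of m] \<open>0 \<le> C\<close>
    by (simp add: T_def P_def mult_left_mono)
  have "0 < 1 + 1 / k"
    using \<open>0 < k\<close> by (intro add_pos_pos) simp_all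
  moreover have "rotation_radius g F k0 m \<beta> (integral {0..\<beta>} n)
      = saddle_threshold k T P * (1 + 1 / k) + (1 + 1 / k)"
    by (simp add: rotation_radius_def k_def T_def P_def C_def distrib_right)
  ultimately have "saddle_threshold k T P * (1 + 1 / k) < norm z"
    using far by linarith
  with forcing_bound obtain a b where "\<And>t. t \<in> {0..T} \<Longrightarrow> a * fst (\<zeta> t - q) + b * snd (\<zeta> t - q) > 0"
    using solution_stays_in_halfplane[OF \<open>0 < g\<close> sol F0_bound \<open>0 \<le> C\<close> n_nonneg n_integrable]
      \<open>norm q \<le> 1\<close> unfolding k_def by metis
  moreover have "continuous_on {0..T} \<zeta>"
    using sol by (auto simp: is_solution_def intro: continuous_on_subset)
  ultimately show "rot_defined m \<beta> \<zeta> q" and "rot m \<beta> \<zeta> q < 1"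
    using rot_lt_1_if_halfplane[of m \<beta> \<zeta>] \<open>0 \<le> T\<close> unfolding T_def by blast+
qed

theorem lemma2:
  fixes g a \<beta> k0 :: real and F :: "real \<Rightarrow> real" and m :: nat
  assumes g_pos: "g > 0"
    and F_C1: "F C1_differentiable_on UNIV"
    and a_in: "0 < a" "a < 1"
    and F_zeros: "F 0 = 0" "F a = 0" "F 1 = 0"
    and F_pos: "\<And>s. s < 0 \<or> (a < s \<and> s < 1) \<Longrightarrow> F s > 0"
    and F_neg: "\<And>s. (0 < s \<and> s < a) \<or> 1 < s \<Longrightarrow> F s < 0"
    and beta_pos: "\<beta> > 0"
    and k0: "0 < k0" "k0 \<le> c0_of F"
    and m_ge: "m \<ge> 1"
  shows "\<forall>L. \<exists>R0>0. \<forall>n :: real \<Rightarrow> real.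
           (\<forall>t. n t \<ge> 0) \<and> (\<forall>t. n (t + \<beta>) = n t) \<and>
           (\<forall>u v. n integrable_on {u..v}) \<and> integral {0..\<beta>} n = L \<longrightarrow>
           (\<forall>z2 q0 \<zeta>. norm z2 \<ge> R0 \<and> norm q0 \<le> 1 \<and> is_solution g F k0 n \<zeta> z2 \<longrightarrow>
              rot_defined m \<beta> \<zeta> q0 \<and> rot m \<beta> \<zeta> q0 < 1)"
proof -
  have "continuous_on {0..1} F"
    using C1_differentiable_imp_continuous_on[OF F_C1] by (rule continuous_on_subset) simp
  then have "rot_defined m \<beta> \<zeta> q \<and> rot m \<beta> \<zeta> q < 1"
    if "\<forall>t. n t \<ge> 0" "\<forall>t. n (t + \<beta>) = n t" "\<forall>u v. n integrable_on {u..v}"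
      "integral {0..\<beta>} n = L" "rotation_radius g F k0 m \<beta> L \<le> norm z" "norm q \<le> 1"
      "is_solution g F k0 n \<zeta> z"
    for n L z q \<zeta>
    using rot_lt_1_beyond_rotation_radius[OF g_pos _ _ _ _ _ _ that(7,6)] that(1-5) k0 beta_pos by simp
  moreover have "0 < rotation_radius g F k0 m \<beta> L" for L
    using rotation_radius_pos[OF g_pos] k0 beta_pos by simp
  ultimately show ?thesis
    by blast
qed

end
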